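(* Let $A=kQ/I$ be a triangular quadratic string algebra and let $n\ge 2$. (a) For every $f\in\mathcal{B}^n_-$, one has $f-f_+\in{\rm Im}\,\delta^{n-1}$. (b) For every $g\in\mathcal{B}^n_+$, one has $g-g_-\in{\rm Im}\,\delta^{n-1}$.
   Context: $k$ is a field, $Q$ a finite quiver without oriented cycles, $I$ an admissible ideal of $kQ$ generated by paths of length 2, $A=kQ/I$; paths are composed left to right, $\overline{x}$ denotes the class of $x$ modulo $I$. String algebra: (S1) $I$ generated by paths; (S2) each vertex is the source of at most two arrows and the target of at most two arrows; (S3) for each arrow $\alpha$ there is at most one arrow $\beta$ with $\alpha\beta\notin I$ and at most one arrow $\gamma$ with $\gamma\alpha\notin I$. For an arrow $\alpha$, $\langle\alpha\rangle$ is the two-sided ideal of $kQ$ generated by $\alpha$ (a path lies in it iff $\alpha$ occurs in it). Let $E$ be the subalgebra of $A$ spanned by the vertex idempotents. Set $\Gamma_0=Q_0$, $\Gamma_1=Q_1$, and for $n\ge2$, $\Gamma_n=\{\alpha_1\cdots\alpha_n : \alpha_i \text{ arrows}, \alpha_i\alpha_{i+1}\in I \text{ for } 1\le i<n\}$; $k\Gamma_n$ is the $E$-$E$-bimodule they span. Let $\mathcal{C}^n=\mathrm{Hom}_{E\text{-}E}(k\Gamma_n,A)$, with differential $\delta^n:\mathcal{C}^n\to\mathcal{C}^{n+1}$, $(\delta^n\phi)(\alpha_1\cdots\alpha_{n+1})=\overline{\alpha_1}\,\phi(\alpha_2\cdots\alpha_{n+1})+(-1)^{n+1}\phi(\alpha_1\cdots\alpha_n)\,\overline{\alpha_{n+1}}$.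 A basis of $\mathcal{C}^n$ consists of the pairs $(\alpha_1\cdots\alpha_n,\overline{p})$ with $\alpha_1\cdots\alpha_n\in\Gamma_n$ and $p\notin I$ a path from $s(\alpha_1)$ to $t(\alpha_n)$; this pair denotes the map sending $\alpha_1\cdots\alpha_n$ to $\overline p$ and all other elements of $\Gamma_n$ to $0$. $\mathcal{B}^n_-$ is the set of basis elements of the form $(\alpha_1\cdots\alpha_n,\overline{\alpha_1p})$; $\mathcal{B}^n_0$ those $(\alpha_1\cdots\alpha_n,\overline w)$ with $w\notin\langle\alpha_1\rangle$, $w\notin\langle\alpha_n\rangle$; $\mathcal{B}^n_+$ those $(\alpha_1\cdots\alpha_n,\overline{q\alpha_n})$ with $q\notin\langle\alpha_1\rangle$. For $f=(\alpha_1\cdots\alpha_n,\overline{\alpha_1p})\in\mathcal{B}^n_-$, define $f_+\in\mathcal{C}^n$ by $f_+(\alpha_2\cdots\alpha_{n+1})=(-1)^{n+1}\overline{p\alpha_{n+1}}$ for every arrow $\alpha_{n+1}$ with $\alpha_2\cdots\alpha_{n+1}\in\Gamma_n$, and $f_+=0$ on all other elements of $\Gamma_n$. For $g=(\alpha_1\cdots\alpha_n,\overline{q\alpha_n})\in\mathcal{B}^n_+$, define $g_-\in\mathcal{C}^n$ by $g_-(\alpha_0\alpha_1\cdots\alpha_{n-1})=(-1)^{n+1}\overline{\alpha_0q}$ for every arrow $\alpha_0$ with $\alpha_0\alpha_1\cdots\alpha_{n-1}\in\Gamma_n$, and $g_-=0$ on all other elements of $\Gamma_n$. *)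

theory Defs
  imports Main
begin

text \<open>A bound quiver with monomial quadratic relations: vertices, arrows, source,
 target, and the set of length-2 paths (pairs of arrows) generating the ideal I.
 Paths are pairs (v, xs): starting vertex v and the list of arrows, composed left to right;
 (v, []) is the trivial path e_v.\<close>
record ('v, 'a) bquiver =
  verts :: "'v set"
  arrs  :: "'a set"
  src   :: "'a \<Rightarrow> 'v"
  tgt   :: "'a \<Rightarrow> 'v"
  rels  :: "('a \<times> 'a) set"

definition is_path :: "('v, 'a) bquiver \<Rightarrow> 'v \<times> 'a list \<Rightarrow> bool" where
  "is_path Q p \<longleftrightarrow> (case p of (v, xs) \<Rightarrow>
     v \<in> verts Q \<and> set xs \<subseteq> arrs Q \<and> (xs \<noteq> [] \<longrightarrow> src Q (hd xs) = v) \<and>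
     (\<forall>i. Suc i < length xs \<longrightarrow> tgt Q (xs ! i) = src Q (xs ! Suc i)))"

definition path_tgt :: "('v, 'a) bquiver \<Rightarrow> 'v \<times> 'a list \<Rightarrow> 'v" where
  "path_tgt Q p = (case p of (v, xs) \<Rightarrow> if xs = [] then v else tgt Q (last xs))"

definition nonzero_path :: "('v, 'a) bquiver \<Rightarrow> 'v \<times> 'a list \<Rightarrow> bool" where
  "nonzero_path Q p \<longleftrightarrow> is_path Q p \<and>
     (\<forall>i. Suc i < length (snd p) \<longrightarrow> (snd p ! i, snd p ! Suc i) \<notin> rels Q)"

definition tqsa :: "('v, 'a) bquiver \<Rightarrow> bool" where
  "tqsa Q \<longleftrightarrow>
     finite (verts Q) \<and> finite (arrs Q) \<and>
     (\<forall>\<alpha>\<in>arrs Q. src Q \<alpha> \<in> verts Q \<and> tgt Q \<alpha> \<in> verts Q) \<and>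
     rels Q \<subseteq> {(\<alpha>, \<beta>). \<alpha> \<in> arrs Q \<and> \<beta> \<in> arrs Q \<and> tgt Q \<alpha> = src Q \<beta>} \<and>
     \<comment> \<open>no oriented cycles\<close>
     (\<forall>v xs. is_path Q (v, xs) \<and> xs \<noteq> [] \<longrightarrow> path_tgt Q (v, xs) \<noteq> v) \<and>
     \<comment> \<open>(S2)\<close>
     (\<forall>v\<in>verts Q. card {\<alpha>\<in>arrs Q. src Q \<alpha> = v} \<le> 2 \<and> card {\<alpha>\<in>arrs Q. tgt Q \<alpha> = v} \<le> 2) \<and>
     \<comment> \<open>(S3)\<close>
     (\<forall>\<alpha>\<in>arrs Q.
        card {\<beta>\<in>arrs Q. tgt Q \<alpha> = src Q \<beta> \<and> (\<alpha>, \<beta>) \<notin> rels Q} \<le> 1 \<and>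
        card {\<gamma>\<in>arrs Q. tgt Q \<gamma> = src Q \<alpha> \<and> (\<gamma>, \<alpha>) \<notin> rels Q} \<le> 1)"

definition Gamma :: "('v, 'a) bquiver \<Rightarrow> nat \<Rightarrow> 'a list set" where
  "Gamma Q n = {xs. length xs = n \<and> set xs \<subseteq> arrs Q \<and>
     (\<forall>i. Suc i < n \<longrightarrow> tgt Q (xs ! i) = src Q (xs ! Suc i) \<and> (xs ! i, xs ! Suc i) \<in> rels Q)}"

text \<open>Elements of A are coefficient functions on paths; cls Q p is the class of the path p.\<close>
definition cls :: "('v, 'a) bquiver \<Rightarrow> 'v \<times> 'a list \<Rightarrow> 'v \<times> 'a list \<Rightarrow> 'k::field" where
  "cls Q p = (\<lambda>q. if q = p \<and> nonzero_path Q p then 1 else 0)"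

definition lmult :: "('v, 'a) bquiver \<Rightarrow> 'a \<Rightarrow> ('v \<times> 'a list \<Rightarrow> 'k::field) \<Rightarrow> 'v \<times> 'a list \<Rightarrow> 'k" where
  "lmult Q \<alpha> x = (\<lambda>(w, zs). if nonzero_path Q (w, zs) \<and> zs \<noteq> [] \<and> hd zs = \<alpha>
                              then x (tgt Q \<alpha>, tl zs) else 0)"

definition rmult :: "('v, 'a) bquiver \<Rightarrow> ('v \<times> 'a list \<Rightarrow> 'k::field) \<Rightarrow> 'a \<Rightarrow> 'v \<times> 'a list \<Rightarrow> 'k" where
  "rmult Q x \<beta> = (\<lambda>(w, zs). if nonzero_path Q (w, zs) \<and> zs \<noteq> [] \<and> last zs = \<beta>
                              then x (w, butlast zs) else 0)"

text \<open>Cochains in C^m (m >= 1): E-E-bimodule maps kGamma_m -> A, i.e. each element of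
 Gamma_m is sent to a combination of nonzero paths parallel to it.\<close>
definition cochain :: "('v, 'a) bquiver \<Rightarrow> nat \<Rightarrow> ('a list \<Rightarrow> 'v \<times> 'a list \<Rightarrow> 'k::field) \<Rightarrow> bool" where
  "cochain Q m \<phi> \<longleftrightarrow> (\<forall>\<gamma> q. \<phi> \<gamma> q \<noteq> 0 \<longrightarrow>
      \<gamma> \<in> Gamma Q m \<and> nonzero_path Q q \<and> fst q = src Q (hd \<gamma>) \<and> path_tgt Q q = tgt Q (last \<gamma>))"

definition delta :: "('v, 'a) bquiver \<Rightarrow> nat \<Rightarrow> ('a list \<Rightarrow> 'v \<times> 'a list \<Rightarrow> 'k::field)
                     \<Rightarrow> 'a list \<Rightarrow> 'v \<times> 'a list \<Rightarrow> 'k" where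
  "delta Q m \<phi> = (\<lambda>\<gamma> q. if \<gamma> \<in> Gamma Q (Suc m)
       then lmult Q (hd \<gamma>) (\<phi> (tl \<gamma>)) q + (-1) ^ Suc m * rmult Q (\<phi> (butlast \<gamma>)) (last \<gamma>) q
       else 0)"

definition basis_elem :: "('v, 'a) bquiver \<Rightarrow> 'a list \<Rightarrow> 'v \<times> 'a list \<Rightarrow> 'a list \<Rightarrow> 'v \<times> 'a list \<Rightarrow> 'k::field" where
  "basis_elem Q \<gamma> p = (\<lambda>\<gamma>' q. if \<gamma>' = \<gamma> then cls Q p q else 0)"

text \<open>f = (alpha_1...alpha_n, class of alpha_1 p) in B^n_-, where p = (t alpha_1, ys).\<close>
definition in_Bminus :: "('v, 'a) bquiver \<Rightarrow> nat \<Rightarrow> 'a list \<Rightarrow> 'a list \<Rightarrow> bool" where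
  "in_Bminus Q n \<gamma> ys \<longleftrightarrow> \<gamma> \<in> Gamma Q n \<and>
     nonzero_path Q (src Q (hd \<gamma>), hd \<gamma> # ys) \<and>
     path_tgt Q (src Q (hd \<gamma>), hd \<gamma> # ys) = tgt Q (last \<gamma>)"

definition f_plus :: "('v, 'a) bquiver \<Rightarrow> nat \<Rightarrow> 'a list \<Rightarrow> 'a list \<Rightarrow> 'a list \<Rightarrow> 'v \<times> 'a list \<Rightarrow> 'k::field" where
  "f_plus Q n \<gamma> ys = (\<lambda>\<gamma>' q. if \<gamma>' \<in> Gamma Q n \<and> butlast \<gamma>' = tl \<gamma>
       then (-1) ^ (n + 1) * cls Q (tgt Q (hd \<gamma>), ys @ [last \<gamma>']) q else 0)"

text \<open>g = (alpha_1...alpha_n, class of q alpha_n) in B^n_+, where q = (s alpha_1, zs), q not in <alpha_1>.\<close>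
definition in_Bplus :: "('v, 'a) bquiver \<Rightarrow> nat \<Rightarrow> 'a list \<Rightarrow> 'a list \<Rightarrow> bool" where
  "in_Bplus Q n \<gamma> zs \<longleftrightarrow> \<gamma> \<in> Gamma Q n \<and>
     nonzero_path Q (src Q (hd \<gamma>), zs @ [last \<gamma>]) \<and>
     path_tgt Q (src Q (hd \<gamma>), zs @ [last \<gamma>]) = tgt Q (last \<gamma>) \<and>
     hd \<gamma> \<notin> set zs"

definition g_minus :: "('v, 'a) bquiver \<Rightarrow> nat \<Rightarrow> 'a list \<Rightarrow> 'a list \<Rightarrow> 'a list \<Rightarrow> 'v \<times> 'a list \<Rightarrow> 'k::field" where
  "g_minus Q n \<gamma> zs = (\<lambda>\<gamma>' q. if \<gamma>' \<in> Gamma Q n \<and> tl \<gamma>' = butlast \<gamma>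
       then (-1) ^ (n + 1) * cls Q (src Q (hd \<gamma>'), hd \<gamma>' # zs) q else 0)"

definition in_image_delta :: "('v, 'a) bquiver \<Rightarrow> nat \<Rightarrow> ('a list \<Rightarrow> 'v \<times> 'a list \<Rightarrow> 'k::field) \<Rightarrow> bool" where
  "in_image_delta Q n F \<longleftrightarrow> (\<exists>\<phi>. cochain Q (n - 1) \<phi> \<and> delta Q (n - 1) \<phi> = F)"

end

theory Submission
  imports Defs
begin

(* Both differences are coboundaries of a single basis element of C^(n-1):
   f - f_+ = delta (alpha_2...alpha_n, p) and g - g_- = (-1)^n delta (alpha_1...alpha_(n-1), q).
   In the first case the terms of delta with a right factor make up -f_+; of the terms beta p with
   a left factor only beta = alpha_1 survives, since p is a nontrivial path (Q has no oriented
   cycles) and by (S3) at most one arrow beta has beta p outside I. The second case is the mirror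
   image. *)

lemma nonzero_path_iff_successively:
  "nonzero_path Q (v, xs) \<longleftrightarrow>
     v \<in> verts Q \<and> set xs \<subseteq> arrs Q \<and> (xs \<noteq> [] \<longrightarrow> src Q (hd xs) = v) \<and>
     successively (\<lambda>\<alpha> \<beta>. tgt Q \<alpha> = src Q \<beta> \<and> (\<alpha>, \<beta>) \<notin> rels Q) xs"
  by (auto simp: nonzero_path_def is_path_def successively_conv_nth)

lemma Gamma_iff_successively:
  "xs \<in> Gamma Q n \<longleftrightarrow>
     length xs = n \<and> set xs \<subseteq> arrs Q \<and>
     successively (\<lambda>\<alpha> \<beta>. tgt Q \<alpha> = src Q \<beta> \<and> (\<alpha>, \<beta>) \<in> rels Q) xs"
  by (auto simp: Gamma_def successively_conv_nth)

lemma tqsa_arrow_ends: "tqsa Q \<Longrightarrow> \<alpha> \<in> arrs Q \<Longrightarrow> src Q \<alpha> \<in> verts Q \<and> tgt Q \<alpha> \<in> verts Q"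
  unfolding tqsa_def by blast

lemma nonzero_path_Cons:
  assumes "tqsa Q"
  shows "nonzero_path Q (w, \<alpha> # xs) \<longleftrightarrow>
     w = src Q \<alpha> \<and> \<alpha> \<in> arrs Q \<and> nonzero_path Q (tgt Q \<alpha>, xs) \<and> (xs \<noteq> [] \<longrightarrow> (\<alpha>, hd xs) \<notin> rels Q)"
  using tqsa_arrow_ends[OF assms, of \<alpha>]
  by (auto simp: nonzero_path_iff_successively successively_Cons)

lemma nonzero_path_snoc:
  "nonzero_path Q (v, xs @ [\<beta>]) \<longleftrightarrow>
     nonzero_path Q (v, xs) \<and> \<beta> \<in> arrs Q \<and>
     (if xs = [] then src Q \<beta> = v else tgt Q (last xs) = src Q \<beta> \<and> (last xs, \<beta>) \<notin> rels Q)"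
  by (auto simp: nonzero_path_iff_successively successively_append_iff)

lemma nonzero_path_hd: "nonzero_path Q (v, xs) \<Longrightarrow> xs \<noteq> [] \<Longrightarrow> src Q (hd xs) = v \<and> hd xs \<in> arrs Q"
  by (auto simp: nonzero_path_iff_successively)

lemma tqsa_card_nonrel_predecessors:
  "tqsa Q \<Longrightarrow> \<beta> \<in> arrs Q \<Longrightarrow> card {\<alpha>\<in>arrs Q. tgt Q \<alpha> = src Q \<beta> \<and> (\<alpha>, \<beta>) \<notin> rels Q} \<le> 1"
  unfolding tqsa_def by blast

lemma tqsa_card_nonrel_successors:
  "tqsa Q \<Longrightarrow> \<alpha> \<in> arrs Q \<Longrightarrow> card {\<beta>\<in>arrs Q. tgt Q \<alpha> = src Q \<beta> \<and> (\<alpha>, \<beta>) \<notin> rels Q} \<le> 1"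
  unfolding tqsa_def by blast

lemma tqsa_finite_arrs: "tqsa Q \<Longrightarrow> finite (arrs Q)"
  unfolding tqsa_def by blast

lemma nonzero_path_Cons_unique:
  assumes tq: "tqsa Q" and "nonzero_path Q (v, \<alpha> # xs)" "nonzero_path Q (w, \<alpha>' # xs)" "xs \<noteq> []"
  shows "\<alpha> = \<alpha>'"
proof -
  let ?S = "{\<delta>\<in>arrs Q. tgt Q \<delta> = src Q (hd xs) \<and> (\<delta>, hd xs) \<notin> rels Q}"
  have "\<delta> \<in> ?S \<and> hd xs \<in> arrs Q" if "nonzero_path Q (u, \<delta> # xs)" for u \<delta>
  proof -
    have "\<delta> \<in> arrs Q" "nonzero_path Q (tgt Q \<delta>, xs)" "(\<delta>, hd xs) \<notin> rels Q"
      using that assms(4) by (simp_all add: nonzero_path_Cons[OF tq])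
    then show ?thesis
      using nonzero_path_hd[of Q "tgt Q \<delta>" xs] assms(4) by simp
  qed
  then have "\<alpha> \<in> ?S" "\<alpha>' \<in> ?S" "card ?S \<le> 1"
    using assms(2,3) tqsa_card_nonrel_predecessors[OF tq] by blast+
  then show ?thesis
    using card_le_Suc0_iff_eq[of ?S] tqsa_finite_arrs[OF tq] by auto
qed

lemma nonzero_path_snoc_unique:
  assumes tq: "tqsa Q" and "nonzero_path Q (v, xs @ [\<beta>])" "nonzero_path Q (w, xs @ [\<beta>'])" "xs \<noteq> []"
  shows "\<beta> = \<beta>'"
proof -
  let ?S = "{\<delta>\<in>arrs Q. tgt Q (last xs) = src Q \<delta> \<and> (last xs, \<delta>) \<notin> rels Q}"
  have "last xs \<in> arrs Q"
    using assms(2,4) by (auto simp: nonzero_path_iff_successively)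
  then have "card ?S \<le> 1"
    by (rule tqsa_card_nonrel_successors[OF tq])
  moreover have "\<beta> \<in> ?S" "\<beta>' \<in> ?S"
    using assms(2-4) by (simp_all add: nonzero_path_snoc)
  ultimately show ?thesis
    using card_le_Suc0_iff_eq[of ?S] tqsa_finite_arrs[OF tq] by auto
qed

lemma Gamma_tl: "xs \<in> Gamma Q m \<Longrightarrow> tl xs \<in> Gamma Q (m - 1)"
  by (cases xs) (auto simp: Gamma_iff_successively successively_Cons)

lemma Gamma_butlast: "xs \<in> Gamma Q m \<Longrightarrow> butlast xs \<in> Gamma Q (m - 1)"
  by (cases xs rule: rev_cases) (auto simp: Gamma_iff_successively successively_append_iff)

lemma Gamma_hd_tl: "xs \<in> Gamma Q m \<Longrightarrow> tl xs \<noteq> [] \<Longrightarrow> tgt Q (hd xs) = src Q (hd (tl xs))"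
  by (cases xs) (auto simp: Gamma_iff_successively successively_Cons)

lemma Gamma_last_butlast:
  "xs \<in> Gamma Q m \<Longrightarrow> butlast xs \<noteq> [] \<Longrightarrow> tgt Q (last (butlast xs)) = src Q (last xs)"
  by (cases xs rule: rev_cases) (auto simp: Gamma_iff_successively successively_append_iff)

lemma Gamma_src_neq_tgt:
  assumes tq: "tqsa Q" and "xs \<in> Gamma Q m" "xs \<noteq> []"
  shows "tgt Q (last xs) \<noteq> src Q (hd xs)"
proof -
  have "hd xs \<in> arrs Q"
    using assms(2,3) by (auto simp: Gamma_def)
  then have "is_path Q (src Q (hd xs), xs)"
    using assms tqsa_arrow_ends[OF tq, of "hd xs"] by (auto simp: Gamma_def is_path_def)
  then show ?thesis
    using tq assms(3) unfolding tqsa_def path_tgt_def by force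
qed

lemma lmult_cls:
  assumes "tqsa Q"
  shows "lmult Q \<alpha> (cls Q (tgt Q \<alpha>, xs)) = cls Q (src Q \<alpha>, \<alpha> # xs)"
proof (intro ext, clarify)
  fix w zs
  show "lmult Q \<alpha> (cls Q (tgt Q \<alpha>, xs)) (w, zs) = cls Q (src Q \<alpha>, \<alpha> # xs) (w, zs)"
    by (cases zs) (auto simp: lmult_def cls_def nonzero_path_Cons[OF assms])
qed

lemma rmult_cls: "rmult Q (cls Q (v, xs)) \<beta> = cls Q (v, xs @ [\<beta>])"
proof (intro ext, clarify)
  fix w zs
  show "rmult Q (cls Q (v, xs)) \<beta> (w, zs) = cls Q (v, xs @ [\<beta>]) (w, zs)"
    by (cases zs rule: rev_cases) (auto simp: rmult_def cls_def nonzero_path_snoc)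
qed

lemma delta_scale: "delta Q m (\<lambda>\<gamma> q. c * \<phi> \<gamma> q) \<gamma> q = c * delta Q m \<phi> \<gamma> q"
  by (cases q) (simp add: delta_def lmult_def rmult_def algebra_simps)

lemma cochain_basis_elem:
  assumes "\<eta> \<in> Gamma Q m" "nonzero_path Q p" "fst p = src Q (hd \<eta>)" "path_tgt Q p = tgt Q (last \<eta>)"
  shows "cochain Q m (basis_elem Q \<eta> p)"
  using assms by (auto simp: cochain_def basis_elem_def cls_def)

lemma cochain_scale: "cochain Q m \<phi> \<Longrightarrow> cochain Q m (\<lambda>\<gamma> q. c * \<phi> \<gamma> q)"
  unfolding cochain_def by (metis mult_zero_right)

lemma delta_basis_elem:
  assumes tq: "tqsa Q" and "\<eta> \<noteq> []" and v: "v = src Q (hd \<eta>)"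
  shows "delta Q m (basis_elem Q \<eta> (v, xs)) \<beta> q =
    (if \<beta> \<in> Gamma Q (Suc m) then
       (if tl \<beta> = \<eta> then cls Q (src Q (hd \<beta>), hd \<beta> # xs) q else 0)
       + (-1) ^ Suc m * (if butlast \<beta> = \<eta> then cls Q (v, xs @ [last \<beta>]) q else 0)
     else 0)"
proof (cases "\<beta> \<in> Gamma Q (Suc m)")
  case True
  have left: "lmult Q (hd \<beta>) (basis_elem Q \<eta> (v, xs) (tl \<beta>)) q =
      (if tl \<beta> = \<eta> then cls Q (src Q (hd \<beta>), hd \<beta> # xs) q else 0)"
  proof (cases "tl \<beta> = \<eta>")
    case True
    then have "v = tgt Q (hd \<beta>)"
      using Gamma_hd_tl[OF \<open>\<beta> \<in> Gamma Q (Suc m)\<close>] \<open>\<eta> \<noteq> []\<close> v by simp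
    then show ?thesis
      using True by (simp add: basis_elem_def lmult_cls[OF tq])
  qed (auto simp: basis_elem_def lmult_def)
  have right: "rmult Q (basis_elem Q \<eta> (v, xs) (butlast \<beta>)) (last \<beta>) q =
      (if butlast \<beta> = \<eta> then cls Q (v, xs @ [last \<beta>]) q else 0)"
    by (cases "butlast \<beta> = \<eta>") (simp_all add: basis_elem_def rmult_cls, simp add: rmult_def split: prod.split)
  show ?thesis
    unfolding delta_def using True by (simp only: left right if_True)
qed (simp add: delta_def)

lemma cls_Cons_other:
  assumes "tqsa Q" "nonzero_path Q (src Q \<alpha>, \<alpha> # ys)" "ys \<noteq> []" "\<beta> \<noteq> \<alpha>"
  shows "cls Q (src Q \<beta>, \<beta> # ys) q = 0"
  using nonzero_path_Cons_unique[OF assms(1,2) _ assms(3)] assms(4) by (auto simp: cls_def)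

lemma cls_snoc_other:
  assumes "tqsa Q" "nonzero_path Q (v, zs @ [\<omega>])" "zs \<noteq> []" "\<beta> \<noteq> \<omega>"
  shows "cls Q (v, zs @ [\<beta>]) q = 0"
  using nonzero_path_snoc_unique[OF assms(1,2) _ assms(3)] assms(4) by (auto simp: cls_def)

lemma in_image_delta_Bminus:
  fixes Q :: "('v, 'a) bquiver"
  assumes tq: "tqsa Q" and n: "2 \<le> n" and f: "in_Bminus Q n \<gamma> ys"
  shows "in_image_delta Q n
    ((basis_elem Q \<gamma> (src Q (hd \<gamma>), hd \<gamma> # ys) :: 'a list \<Rightarrow> 'v \<times> 'a list \<Rightarrow> 'k::field)
     - f_plus Q n \<gamma> ys)"
proof -
  have \<Gamma>: "\<gamma> \<in> Gamma Q n"
    using f by (simp add: in_Bminus_def)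
  then obtain \<alpha> \<eta> where \<gamma>: "\<gamma> = \<alpha> # \<eta>" and "\<eta> \<noteq> []"
    using n by (cases \<gamma>; cases "tl \<gamma>") (auto simp: Gamma_def)
  have nz: "nonzero_path Q (src Q \<alpha>, \<alpha> # ys)"
    and ends: "path_tgt Q (src Q \<alpha>, \<alpha> # ys) = tgt Q (last \<eta>)"
    using f \<open>\<eta> \<noteq> []\<close> by (simp_all add: in_Bminus_def \<gamma>)
  have \<eta>: "\<eta> \<in> Gamma Q (n - 1)"
    using Gamma_tl[OF \<Gamma>] by (simp add: \<gamma>)
  have v: "tgt Q \<alpha> = src Q (hd \<eta>)"
    using Gamma_hd_tl[OF \<Gamma>] \<open>\<eta> \<noteq> []\<close> by (simp add: \<gamma>)
  have nzy: "nonzero_path Q (tgt Q \<alpha>, ys)"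
    using nz by (simp add: nonzero_path_Cons[OF tq])
  have "ys \<noteq> []"
  proof
    assume "ys = []"
    then have "tgt Q (last \<eta>) = src Q (hd \<eta>)"
      using ends v by (simp add: path_tgt_def)
    then show False
      using Gamma_src_neq_tgt[OF tq \<eta> \<open>\<eta> \<noteq> []\<close>] by contradiction
  qed
  define \<phi> :: "'a list \<Rightarrow> 'v \<times> 'a list \<Rightarrow> 'k" where "\<phi> = basis_elem Q \<eta> (tgt Q \<alpha>, ys)"
  have "cochain Q (n - 1) \<phi>"
    unfolding \<phi>_def using \<eta> nzy v ends \<open>ys \<noteq> []\<close>
    by (intro cochain_basis_elem) (simp_all add: path_tgt_def)
  moreover have "delta Q (n - 1) \<phi> \<beta> q =
      (basis_elem Q \<gamma> (src Q \<alpha>, \<alpha> # ys) - f_plus Q n \<gamma> ys) \<beta> q" for \<beta> q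
  proof -
    have left: "(if tl \<beta> = \<eta> then cls Q (src Q (hd \<beta>), hd \<beta> # ys) q else 0)
        = basis_elem Q \<gamma> (src Q \<alpha>, \<alpha> # ys) \<beta> q"
      using cls_Cons_other[OF tq nz \<open>ys \<noteq> []\<close>, where \<beta> = "hd \<beta>" and q = q] \<open>\<eta> \<noteq> []\<close>
      by (cases \<beta>) (auto simp: basis_elem_def \<gamma>)
    have "Suc (n - 1) = n"
      using n by simp
    then have "delta Q (n - 1) \<phi> \<beta> q =
        (if \<beta> \<in> Gamma Q n then
           (if tl \<beta> = \<eta> then cls Q (src Q (hd \<beta>), hd \<beta> # ys) q else 0)
           + (-1) ^ n * (if butlast \<beta> = \<eta> then cls Q (tgt Q \<alpha>, ys @ [last \<beta>]) q else 0)
         else 0)"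
      unfolding \<phi>_def delta_basis_elem[OF tq \<open>\<eta> \<noteq> []\<close> v] by simp
    then show ?thesis
      using left \<Gamma> by (auto simp: f_plus_def basis_elem_def \<gamma>)
  qed
  ultimately show ?thesis
    unfolding in_image_delta_def \<gamma> by (intro exI[of _ \<phi>] conjI ext) simp_all
qed

lemma in_image_delta_Bplus:
  fixes Q :: "('v, 'a) bquiver"
  assumes tq: "tqsa Q" and n: "2 \<le> n" and g: "in_Bplus Q n \<gamma> zs"
  shows "in_image_delta Q n
    ((basis_elem Q \<gamma> (src Q (hd \<gamma>), zs @ [last \<gamma>]) :: 'a list \<Rightarrow> 'v \<times> 'a list \<Rightarrow> 'k::field)
     - g_minus Q n \<gamma> zs)"
proof -
  have \<Gamma>: "\<gamma> \<in> Gamma Q n"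
    using g by (simp add: in_Bplus_def)
  then obtain \<eta> \<omega> where \<gamma>: "\<gamma> = \<eta> @ [\<omega>]" and "\<eta> \<noteq> []"
    using n by (cases \<gamma> rule: rev_cases) (auto simp: Gamma_def Suc_le_eq)
  define v where "v = src Q (hd \<eta>)"
  have nz: "nonzero_path Q (v, zs @ [\<omega>])"
    using g \<open>\<eta> \<noteq> []\<close> by (simp add: in_Bplus_def \<gamma> v_def)
  have \<eta>: "\<eta> \<in> Gamma Q (n - 1)"
    using Gamma_butlast[OF \<Gamma>] by (simp add: \<gamma>)
  have ends: "tgt Q (last \<eta>) = src Q \<omega>"
    using Gamma_last_butlast[OF \<Gamma>] \<open>\<eta> \<noteq> []\<close> by (simp add: \<gamma>)
  have "zs \<noteq> []"
  proof
    assume "zs = []"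
    then have "tgt Q (last \<eta>) = src Q (hd \<eta>)"
      using nz ends nonzero_path_snoc[of Q v "[]" \<omega>] by (simp add: v_def)
    then show False
      using Gamma_src_neq_tgt[OF tq \<eta> \<open>\<eta> \<noteq> []\<close>] by contradiction
  qed
  define \<phi> :: "'a list \<Rightarrow> 'v \<times> 'a list \<Rightarrow> 'k" where
    "\<phi> = (\<lambda>\<beta> q. (-1) ^ n * basis_elem Q \<eta> (v, zs) \<beta> q)"
  have "cochain Q (n - 1) \<phi>"
    unfolding \<phi>_def using \<eta> nz ends \<open>zs \<noteq> []\<close>
    by (intro cochain_scale cochain_basis_elem) (simp_all add: nonzero_path_snoc path_tgt_def v_def)
  moreover have "delta Q (n - 1) \<phi> \<beta> q =
      (basis_elem Q \<gamma> (v, zs @ [\<omega>]) - g_minus Q n \<gamma> zs) \<beta> q" for \<beta> q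
  proof -
    have right: "(if butlast \<beta> = \<eta> then cls Q (v, zs @ [last \<beta>]) q else 0)
        = basis_elem Q \<gamma> (v, zs @ [\<omega>]) \<beta> q"
      using cls_snoc_other[OF tq nz \<open>zs \<noteq> []\<close>, where \<beta> = "last \<beta>" and q = q] \<open>\<eta> \<noteq> []\<close>
      by (cases \<beta> rule: rev_cases) (auto simp: basis_elem_def \<gamma>)
    have "Suc (n - 1) = n"
      using n by simp
    then have "delta Q (n - 1) \<phi> \<beta> q = (-1) ^ n *
        (if \<beta> \<in> Gamma Q n then
           (if tl \<beta> = \<eta> then cls Q (src Q (hd \<beta>), hd \<beta> # zs) q else 0)
           + (-1) ^ n * (if butlast \<beta> = \<eta> then cls Q (v, zs @ [last \<beta>]) q else 0)
         else 0)"
      unfolding \<phi>_def delta_scale delta_basis_elem[OF tq \<open>\<eta> \<noteq> []\<close> v_def] by simp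
    moreover have "(-1) ^ n * (-1) ^ n = (1 :: 'k)"
      by (simp flip: power_add)
    ultimately show ?thesis
      using right \<Gamma> by (auto simp: g_minus_def basis_elem_def algebra_simps \<gamma>)
  qed
  moreover have "hd \<gamma> = hd \<eta>" "last \<gamma> = \<omega>"
    using \<open>\<eta> \<noteq> []\<close> by (simp_all add: \<gamma>)
  ultimately show ?thesis
    unfolding in_image_delta_def v_def by (intro exI[of _ \<phi>] conjI ext) simp_all
qed

theorem lemma2p1:
  fixes Q :: "('v, 'a) bquiver" and n :: nat
  assumes "tqsa Q" and "2 \<le> n"
  shows "(\<forall>\<gamma> ys. in_Bminus Q n \<gamma> ys \<longrightarrow>
            in_image_delta Q n
              ((basis_elem Q \<gamma> (src Q (hd \<gamma>), hd \<gamma> # ys) :: 'a list \<Rightarrow> 'v \<times> 'a list \<Rightarrow> 'k::field)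
               - f_plus Q n \<gamma> ys))
       \<and> (\<forall>\<gamma> zs. in_Bplus Q n \<gamma> zs \<longrightarrow>
            in_image_delta Q n
              ((basis_elem Q \<gamma> (src Q (hd \<gamma>), zs @ [last \<gamma>]) :: 'a list \<Rightarrow> 'v \<times> 'a list \<Rightarrow> 'k)
               - g_minus Q n \<gamma> zs))"
  using in_image_delta_Bminus[OF assms] in_image_delta_Bplus[OF assms] by blast

end
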